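(* Let $\mathbb{X}$ be a Cartesian left additive category and $f_\bullet:A\to B$ a $\mathsf{D}$-sequence. Then (i) $\mathsf{D}[f_\bullet]$ is a $\mathsf{D}$-sequence; (ii) $\mathsf{T}(f_\bullet)$ is a $\mathsf{D}$-sequence; and (iii) $\langle1,0\rangle\cdot\mathsf{T}(f_\bullet)=f_\bullet\cdot\langle1,0\rangle$; (iv) $(1\times\pi_i)\cdot\mathsf{T}(f_\bullet)=\mathsf{T}_2(f_\bullet)\cdot(1\times\pi_i)$ for $i\in\{0,1\}$, where $\mathsf{T}_2(f_\bullet):=\langle\pi_0\cdot f_\bullet,\langle(1\times\pi_0)\cdot\mathsf{D}[f_\bullet],(1\times\pi_1)\cdot\mathsf{D}[f_\bullet]\rangle\rangle:A\times(A\times A)\to B\times(B\times B)$; (v) $(1\times(\pi_0+\pi_1))\cdot\mathsf{T}(f_\bullet)=\mathsf{T}_2(f_\bullet)\cdot(1\times(\pi_0+\pi_1))$; (vi) $\ell\cdot\mathsf{T}^2(f_\bullet)=\mathsf{T}(f_\bullet)\cdot\ell$; (vii) $c\cdot\mathsf{T}^2(f_\bullet)=\mathsf{T}^2(f_\bullet)\cdot c$.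
   Context: Composition in diagrammatic order. A Cartesian left additive category: finite products, hom-sets commutative monoids with $f(g+h)=fg+fh$, $f0=0$, projections additive. For an object $X$: $\langle1,0\rangle:X\to X\times X$; $1\times\pi_i,\ 1\times(\pi_0+\pi_1):X\times(X\times X)\to X\times X$; $\ell=\langle1,0\rangle\times\langle0,1\rangle:X\times X\to(X\times X)\times(X\times X)$; $c=\langle\langle\pi_0\pi_0,\pi_1\pi_0\rangle,\langle\pi_0\pi_1,\pi_1\pi_1\rangle\rangle:(X\times X)\times(X\times X)\to(X\times X)\times(X\times X)$ (swap of middle components). $\mathsf{P}(X)=X\times X$, $\mathsf{P}(f)=f\times f$. A pre-$\mathsf{D}$-sequence $f_\bullet:A\to B$ is $(f_n)_{n\ge0}$ with $f_n:\mathsf{P}^n(A)\to B$; $(h\cdot f_\bullet)_n=\mathsf{P}^n(h)f_n$ for $h:A'\to A$; $(f_\bullet\cdot k)_n=f_nk$ for $k:B\to C$; pairing $\langle f_\bullet,g_\bullet\rangle_n=\langle f_n,g_n\rangle$; sums and $0_\bullet$ pointwise. $\mathsf{T}(f_\bullet):\mathsf{P}(A)\to\mathsf{P}(B)$, $\mathsf{T}(f_\bullet)_n=\langle\mathsf{P}^n(\pi_0)f_n,f_{n+1}\rangle$; $\mathsf{D}[f_\bullet]:\mathsf{P}(A)\to B$, $\mathsf{D}[f_\bullet]_n=f_{n+1}$. A $\mathsf{D}$-sequence is a pre-$\mathsf{D}$-sequence such that for all $n$ (maps taken for the object $\mathsf{P}^n(A)$): $\langle1,0\rangle\cdot\mathsf{D}^{n+1}[f_\bullet]=0_\bullet$;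 $(1\times(\pi_0+\pi_1))\cdot\mathsf{D}^{n+1}[f_\bullet]=(1\times\pi_0)\cdot\mathsf{D}^{n+1}[f_\bullet]+(1\times\pi_1)\cdot\mathsf{D}^{n+1}[f_\bullet]$; $\ell\cdot\mathsf{D}^{n+2}[f_\bullet]=\mathsf{D}^{n+1}[f_\bullet]$; $c\cdot\mathsf{D}^{n+2}[f_\bullet]=\mathsf{D}^{n+2}[f_\bullet]$. In $\mathsf{T}_2$, $\pi_0:A\times(A\times A)\to A$. *)

theory Defs
  imports Main
begin

text \<open>Composition cl_cmp f g is in DIAGRAMMATIC order (first f, then g).\<close>

record ('o, 'm) cla_data =
  cl_hom  :: "'o \<Rightarrow> 'o \<Rightarrow> 'm set"
  cl_id   :: "'o \<Rightarrow> 'm"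
  cl_cmp  :: "'m \<Rightarrow> 'm \<Rightarrow> 'm"
  cl_prd  :: "'o \<Rightarrow> 'o \<Rightarrow> 'o"
  cl_pr0  :: "'o \<Rightarrow> 'o \<Rightarrow> 'm"
  cl_pr1  :: "'o \<Rightarrow> 'o \<Rightarrow> 'm"
  cl_pair :: "'m \<Rightarrow> 'm \<Rightarrow> 'm"
  cl_trm  :: "'o"
  cl_bang :: "'o \<Rightarrow> 'm"
  cl_add  :: "'m \<Rightarrow> 'm \<Rightarrow> 'm"
  cl_zer  :: "'o \<Rightarrow> 'o \<Rightarrow> 'm"

definition cla :: "('o, 'm) cla_data \<Rightarrow> bool" where
  "cla C \<longleftrightarrow>
    \<comment> \<open>category\<close>
    (\<forall>A. cl_id C A \<in> cl_hom C A A) \<and>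
    (\<forall>A B D f g. f \<in> cl_hom C A B \<longrightarrow> g \<in> cl_hom C B D \<longrightarrow> cl_cmp C f g \<in> cl_hom C A D) \<and>
    (\<forall>A B D E f g h. f \<in> cl_hom C A B \<longrightarrow> g \<in> cl_hom C B D \<longrightarrow> h \<in> cl_hom C D E \<longrightarrow>
        cl_cmp C (cl_cmp C f g) h = cl_cmp C f (cl_cmp C g h)) \<and>
    (\<forall>A B f. f \<in> cl_hom C A B \<longrightarrow> cl_cmp C (cl_id C A) f = f \<and> cl_cmp C f (cl_id C B) = f) \<and>
    \<comment> \<open>binary products\<close>
    (\<forall>A B. cl_pr0 C A B \<in> cl_hom C (cl_prd C A B) A \<and> cl_pr1 C A B \<in> cl_hom C (cl_prd C A B) B) \<and>
    (\<forall>X A B f g. f \<in> cl_hom C X A \<longrightarrow> g \<in> cl_hom C X B \<longrightarrow>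
        cl_pair C f g \<in> cl_hom C X (cl_prd C A B) \<and>
        cl_cmp C (cl_pair C f g) (cl_pr0 C A B) = f \<and> cl_cmp C (cl_pair C f g) (cl_pr1 C A B) = g) \<and>
    (\<forall>X A B h. h \<in> cl_hom C X (cl_prd C A B) \<longrightarrow>
        cl_pair C (cl_cmp C h (cl_pr0 C A B)) (cl_cmp C h (cl_pr1 C A B)) = h) \<and>
    \<comment> \<open>terminal object\<close>
    (\<forall>X. cl_bang C X \<in> cl_hom C X (cl_trm C)) \<and>
    (\<forall>X h. h \<in> cl_hom C X (cl_trm C) \<longrightarrow> h = cl_bang C X) \<and>
    \<comment> \<open>hom-sets are commutative monoids\<close>
    (\<forall>A B. cl_zer C A B \<in> cl_hom C A B) \<and>
    (\<forall>A B f g. f \<in> cl_hom C A B \<longrightarrow> g \<in> cl_hom C A B \<longrightarrow> cl_add C f g \<in> cl_hom C A B) \<and>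
    (\<forall>A B f g h. f \<in> cl_hom C A B \<longrightarrow> g \<in> cl_hom C A B \<longrightarrow> h \<in> cl_hom C A B \<longrightarrow>
        cl_add C (cl_add C f g) h = cl_add C f (cl_add C g h)) \<and>
    (\<forall>A B f g. f \<in> cl_hom C A B \<longrightarrow> g \<in> cl_hom C A B \<longrightarrow> cl_add C f g = cl_add C g f) \<and>
    (\<forall>A B f. f \<in> cl_hom C A B \<longrightarrow> cl_add C f (cl_zer C A B) = f) \<and>
    \<comment> \<open>left additivity: f(g+h) = fg + fh, f0 = 0\<close>
    (\<forall>A B D f g h. f \<in> cl_hom C A B \<longrightarrow> g \<in> cl_hom C B D \<longrightarrow> h \<in> cl_hom C B D \<longrightarrow>
        cl_cmp C f (cl_add C g h) = cl_add C (cl_cmp C f g) (cl_cmp C f h)) \<and>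
    (\<forall>A B D f. f \<in> cl_hom C A B \<longrightarrow> cl_cmp C f (cl_zer C B D) = cl_zer C A D) \<and>
    \<comment> \<open>projections are additive\<close>
    (\<forall>X A B f g. f \<in> cl_hom C X (cl_prd C A B) \<longrightarrow> g \<in> cl_hom C X (cl_prd C A B) \<longrightarrow>
        cl_cmp C (cl_add C f g) (cl_pr0 C A B) = cl_add C (cl_cmp C f (cl_pr0 C A B)) (cl_cmp C g (cl_pr0 C A B)) \<and>
        cl_cmp C (cl_add C f g) (cl_pr1 C A B) = cl_add C (cl_cmp C f (cl_pr1 C A B)) (cl_cmp C g (cl_pr1 C A B))) \<and>
    (\<forall>X A B. cl_cmp C (cl_zer C X (cl_prd C A B)) (cl_pr0 C A B) = cl_zer C X A \<and>
        cl_cmp C (cl_zer C X (cl_prd C A B)) (cl_pr1 C A B) = cl_zer C X B)"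

text \<open>f \<times> g for f : A \<rightarrow> A', g : B \<rightarrow> B' (the source objects A, B are given explicitly).\<close>
definition pmap :: "('o,'m) cla_data \<Rightarrow> 'o \<Rightarrow> 'o \<Rightarrow> 'm \<Rightarrow> 'm \<Rightarrow> 'm" where
  "pmap C A B f g = cl_pair C (cl_cmp C (cl_pr0 C A B) f) (cl_cmp C (cl_pr1 C A B) g)"

definition Pob :: "('o,'m) cla_data \<Rightarrow> 'o \<Rightarrow> 'o" where
  "Pob C X = cl_prd C X X"

definition Pn :: "('o,'m) cla_data \<Rightarrow> nat \<Rightarrow> 'o \<Rightarrow> 'o" where
  "Pn C n X = (Pob C ^^ n) X"

definition Par :: "('o,'m) cla_data \<Rightarrow> 'o \<Rightarrow> 'm \<Rightarrow> 'm" where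
  "Par C X h = pmap C X X h h"

fun Parn :: "('o,'m) cla_data \<Rightarrow> nat \<Rightarrow> 'o \<Rightarrow> 'm \<Rightarrow> 'm" where
  "Parn C 0 X h = h"
| "Parn C (Suc n) X h = Par C (Pn C n X) (Parn C n X h)"

definition unit10 :: "('o,'m) cla_data \<Rightarrow> 'o \<Rightarrow> 'm" where
  "unit10 C X = cl_pair C (cl_id C X) (cl_zer C X X)"

definition unit01 :: "('o,'m) cla_data \<Rightarrow> 'o \<Rightarrow> 'm" where
  "unit01 C X = cl_pair C (cl_zer C X X) (cl_id C X)"

definition one_x_pr0 :: "('o,'m) cla_data \<Rightarrow> 'o \<Rightarrow> 'm" where
  "one_x_pr0 C X = pmap C X (Pob C X) (cl_id C X) (cl_pr0 C X X)"

definition one_x_pr1 :: "('o,'m) cla_data \<Rightarrow> 'o \<Rightarrow> 'm" where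
  "one_x_pr1 C X = pmap C X (Pob C X) (cl_id C X) (cl_pr1 C X X)"

definition one_x_sum :: "('o,'m) cla_data \<Rightarrow> 'o \<Rightarrow> 'm" where
  "one_x_sum C X = pmap C X (Pob C X) (cl_id C X) (cl_add C (cl_pr0 C X X) (cl_pr1 C X X))"

definition ell :: "('o,'m) cla_data \<Rightarrow> 'o \<Rightarrow> 'm" where
  "ell C X = pmap C X X (unit10 C X) (unit01 C X)"

definition cswap :: "('o,'m) cla_data \<Rightarrow> 'o \<Rightarrow> 'm" where
  "cswap C X = (let P = Pob C X in
     cl_pair C (cl_pair C (cl_cmp C (cl_pr0 C P P) (cl_pr0 C X X)) (cl_cmp C (cl_pr1 C P P) (cl_pr0 C X X)))
               (cl_pair C (cl_cmp C (cl_pr0 C P P) (cl_pr1 C X X)) (cl_cmp C (cl_pr1 C P P) (cl_pr1 C X X))))"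

definition pre_dseq :: "('o,'m) cla_data \<Rightarrow> 'o \<Rightarrow> 'o \<Rightarrow> (nat \<Rightarrow> 'm) \<Rightarrow> bool" where
  "pre_dseq C A B f \<longleftrightarrow> (\<forall>n. f n \<in> cl_hom C (Pn C n A) B)"

definition sprec :: "('o,'m) cla_data \<Rightarrow> 'o \<Rightarrow> 'm \<Rightarrow> (nat \<Rightarrow> 'm) \<Rightarrow> (nat \<Rightarrow> 'm)" where
  "sprec C X h f = (\<lambda>n. cl_cmp C (Parn C n X h) (f n))"

definition spost :: "('o,'m) cla_data \<Rightarrow> (nat \<Rightarrow> 'm) \<Rightarrow> 'm \<Rightarrow> (nat \<Rightarrow> 'm)" where
  "spost C f k = (\<lambda>n. cl_cmp C (f n) k)"

definition spair :: "('o,'m) cla_data \<Rightarrow> (nat \<Rightarrow> 'm) \<Rightarrow> (nat \<Rightarrow> 'm) \<Rightarrow> (nat \<Rightarrow> 'm)" where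
  "spair C f g = (\<lambda>n. cl_pair C (f n) (g n))"

definition sadd :: "('o,'m) cla_data \<Rightarrow> (nat \<Rightarrow> 'm) \<Rightarrow> (nat \<Rightarrow> 'm) \<Rightarrow> (nat \<Rightarrow> 'm)" where
  "sadd C f g = (\<lambda>n. cl_add C (f n) (g n))"

definition szero :: "('o,'m) cla_data \<Rightarrow> 'o \<Rightarrow> 'o \<Rightarrow> (nat \<Rightarrow> 'm)" where
  "szero C A B = (\<lambda>n. cl_zer C (Pn C n A) B)"

definition Dop :: "(nat \<Rightarrow> 'm) \<Rightarrow> (nat \<Rightarrow> 'm)" where
  "Dop f = (\<lambda>n. f (Suc n))"

definition Tseq :: "('o,'m) cla_data \<Rightarrow> 'o \<Rightarrow> (nat \<Rightarrow> 'm) \<Rightarrow> (nat \<Rightarrow> 'm)" where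
  "Tseq C A f = (\<lambda>n. cl_pair C (cl_cmp C (Parn C n (Pob C A) (cl_pr0 C A A)) (f n)) (f (Suc n)))"

definition is_dseq :: "('o,'m) cla_data \<Rightarrow> 'o \<Rightarrow> 'o \<Rightarrow> (nat \<Rightarrow> 'm) \<Rightarrow> bool" where
  "is_dseq C A B f \<longleftrightarrow> pre_dseq C A B f \<and>
    (\<forall>n. let X = Pn C n A in
       sprec C X (unit10 C X) ((Dop ^^ (n+1)) f) = szero C X B \<and>
       sprec C (cl_prd C X (Pob C X)) (one_x_sum C X) ((Dop ^^ (n+1)) f) =
         sadd C (sprec C (cl_prd C X (Pob C X)) (one_x_pr0 C X) ((Dop ^^ (n+1)) f))
                (sprec C (cl_prd C X (Pob C X)) (one_x_pr1 C X) ((Dop ^^ (n+1)) f)) \<and>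
       sprec C (Pob C X) (ell C X) ((Dop ^^ (n+2)) f) = (Dop ^^ (n+1)) f \<and>
       sprec C (Pob C (Pob C X)) (cswap C X) ((Dop ^^ (n+2)) f) = (Dop ^^ (n+2)) f)"

definition T2seq :: "('o,'m) cla_data \<Rightarrow> 'o \<Rightarrow> (nat \<Rightarrow> 'm) \<Rightarrow> (nat \<Rightarrow> 'm)" where
  "T2seq C A f = spair C (sprec C (cl_prd C A (Pob C A)) (cl_pr0 C A (Pob C A)) f)
     (spair C (sprec C (cl_prd C A (Pob C A)) (one_x_pr0 C A) (Dop f))
              (sprec C (cl_prd C A (Pob C A)) (one_x_pr1 C A) (Dop f)))"

end

(*
  A D-sequence is the same as a pre-D-sequence f such that at every level n the shifted
  sequence D^(n+1)[f] : P(P^n A) -> B satisfies four laws (dseq_laws) at the object P^n A.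
  Part (i) is then a reindexing. For part (ii), D^(n+1)[T f] = <P(g) . D^(n+1)[f], D^(n+2)[f]>
  with g = P^n(pi0), so it suffices that the laws are stable under pairing and under
  precomposition with P(g) for additive g. The latter holds because all structure maps are
  natural with respect to P(g): <1,0>, l and c need only g 0 = 0, and 1 x (pi0 + pi1) needs
  g to be additive, which P^n(pi0) is. Parts (iii)-(vii) are computed componentwise from
  T f = <pi0 . f, D[f]> and the values of the structure maps on pi0 and P(pi0).
*)

theory Submission
  imports Defs
begin

section \<open>Sequences of morphisms\<close>

lemma Pn_0 [simp]: "Pn C 0 X = X"
  by (simp add: Pn_def)

lemma Pn_Suc: "Pn C (Suc n) X = Pob C (Pn C n X)"
  by (simp add: Pn_def)

lemma Pn_Pob: "Pn C n (Pob C X) = Pn C (Suc n) X"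
  by (simp add: Pn_def funpow_swap1)

lemma Parn_Suc_Par: "Parn C (Suc n) X h = Parn C n (Pob C X) (Par C X h)"
  by (induction n) (simp_all add: Pn_Pob)

lemma Dop_sprec: "Dop (sprec C X h F) = sprec C (Pob C X) (Par C X h) (Dop F)"
  unfolding Dop_def sprec_def Parn_Suc_Par ..

lemma Dop_pow_sprec: "(Dop ^^ k) (sprec C X h F) = sprec C (Pn C k X) (Parn C k X h) ((Dop ^^ k) F)"
  by (induction k) (simp_all add: Dop_sprec Pn_Suc)

lemma Dop_spair: "Dop (spair C F G) = spair C (Dop F) (Dop G)"
  by (simp add: Dop_def spair_def)

lemma Dop_pow_spair: "(Dop ^^ k) (spair C F G) = spair C ((Dop ^^ k) F) ((Dop ^^ k) G)"
  by (induction k) (simp_all add: Dop_spair)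

lemma Tseq_eq_spair: "Tseq C A f = spair C (sprec C (Pob C A) (cl_pr0 C A A) f) (Dop f)"
  by (simp add: Tseq_def spair_def sprec_def Dop_def)

lemma pre_dseq_Dop: "pre_dseq C X B F \<Longrightarrow> pre_dseq C (Pob C X) B (Dop F)"
  by (simp add: pre_dseq_def Dop_def Pn_Pob)

lemma pre_dseq_Dop_pow: "pre_dseq C X B F \<Longrightarrow> pre_dseq C (Pn C k X) B ((Dop ^^ k) F)"
  by (induction k) (simp_all add: pre_dseq_Dop Pn_Suc)

definition dseq_laws :: "('o, 'm) cla_data \<Rightarrow> 'o \<Rightarrow> 'o \<Rightarrow> (nat \<Rightarrow> 'm) \<Rightarrow> bool" where
  "dseq_laws C X B F \<longleftrightarrow>
     sprec C X (unit10 C X) F = szero C X B \<and>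
     sprec C (cl_prd C X (Pob C X)) (one_x_sum C X) F =
       sadd C (sprec C (cl_prd C X (Pob C X)) (one_x_pr0 C X) F)
              (sprec C (cl_prd C X (Pob C X)) (one_x_pr1 C X) F) \<and>
     sprec C (Pob C X) (ell C X) (Dop F) = F \<and>
     sprec C (Pob C (Pob C X)) (cswap C X) (Dop F) = Dop F"

lemma is_dseq_iff_dseq_laws:
  "is_dseq C A B f \<longleftrightarrow> pre_dseq C A B f \<and> (\<forall>n. dseq_laws C (Pn C n A) B ((Dop ^^ Suc n) f))"
  by (simp add: is_dseq_def dseq_laws_def Let_def)

lemma is_dseq_Dop:
  assumes "is_dseq C A B f"
  shows "is_dseq C (Pob C A) B (Dop f)"
proof -
  have "(Dop ^^ Suc n) (Dop f) = (Dop ^^ Suc (Suc n)) f" for n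
    by (simp only: funpow_Suc_right[of "Suc n"] comp_apply)
  with assms show ?thesis
    by (simp only: is_dseq_iff_dseq_laws pre_dseq_Dop Pn_Pob) blast
qed

section \<open>Cartesian left additive categories\<close>

locale cartesian_left_additive =
  fixes C :: "('o, 'm) cla_data"
  assumes cla: "cla C"
begin

abbreviation hom where "hom \<equiv> cl_hom C"
abbreviation cmp (infixl "\<cdot>" 75) where "f \<cdot> g \<equiv> cl_cmp C f g"
abbreviation add (infixl "\<oplus>" 65) where "f \<oplus> g \<equiv> cl_add C f g"
abbreviation prd where "prd \<equiv> cl_prd C"
abbreviation p0 where "p0 \<equiv> cl_pr0 C"
abbreviation p1 where "p1 \<equiv> cl_pr1 C"
abbreviation pair where "pair \<equiv> cl_pair C"
abbreviation zero where "zero \<equiv> cl_zer C"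

named_theorems hom_intros

lemma id_hom [hom_intros]: "cl_id C A \<in> hom A A"
  using cla unfolding cla_def by simp

lemma cmp_hom [hom_intros]: "f \<in> hom A B \<Longrightarrow> g \<in> hom B D \<Longrightarrow> f \<cdot> g \<in> hom A D"
  using cla unfolding cla_def by simp

lemma cmp_assoc: "f \<in> hom A B \<Longrightarrow> g \<in> hom B D \<Longrightarrow> h \<in> hom D E \<Longrightarrow> f \<cdot> g \<cdot> h = f \<cdot> (g \<cdot> h)"
  using cla unfolding cla_def by simp

lemma id_cmp: "f \<in> hom A B \<Longrightarrow> cl_id C A \<cdot> f = f"
  using cla unfolding cla_def by simp

lemma cmp_id: "f \<in> hom A B \<Longrightarrow> f \<cdot> cl_id C B = f"
  using cla unfolding cla_def by simp

lemma p0_hom [hom_intros]: "p0 A B \<in> hom (prd A B) A"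
  using cla unfolding cla_def by simp

lemma p1_hom [hom_intros]: "p1 A B \<in> hom (prd A B) B"
  using cla unfolding cla_def by simp

lemma pair_hom [hom_intros]: "f \<in> hom X A \<Longrightarrow> g \<in> hom X B \<Longrightarrow> pair f g \<in> hom X (prd A B)"
  using cla unfolding cla_def by simp

lemma pair_p0: "f \<in> hom X A \<Longrightarrow> g \<in> hom X B \<Longrightarrow> pair f g \<cdot> p0 A B = f"
  using cla unfolding cla_def by simp

lemma pair_p1: "f \<in> hom X A \<Longrightarrow> g \<in> hom X B \<Longrightarrow> pair f g \<cdot> p1 A B = g"
  using cla unfolding cla_def by simp

lemma pair_eta: "h \<in> hom X (prd A B) \<Longrightarrow> pair (h \<cdot> p0 A B) (h \<cdot> p1 A B) = h"
  using cla unfolding cla_def by simp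

lemma zero_hom [hom_intros]: "zero A B \<in> hom A B"
  using cla unfolding cla_def by simp

lemma add_hom [hom_intros]: "f \<in> hom A B \<Longrightarrow> g \<in> hom A B \<Longrightarrow> f \<oplus> g \<in> hom A B"
  using cla unfolding cla_def by simp

lemma cmp_add: "f \<in> hom A B \<Longrightarrow> g \<in> hom B D \<Longrightarrow> h \<in> hom B D \<Longrightarrow> f \<cdot> (g \<oplus> h) = f \<cdot> g \<oplus> f \<cdot> h"
  using cla unfolding cla_def by simp

lemma cmp_zero: "f \<in> hom A B \<Longrightarrow> f \<cdot> zero B D = zero A D"
  using cla unfolding cla_def by simp

lemma add_p0: "f \<in> hom X (prd A B) \<Longrightarrow> g \<in> hom X (prd A B) \<Longrightarrow> (f \<oplus> g) \<cdot> p0 A B = f \<cdot> p0 A B \<oplus> g \<cdot> p0 A B"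
  using cla unfolding cla_def by simp

lemma add_p1: "f \<in> hom X (prd A B) \<Longrightarrow> g \<in> hom X (prd A B) \<Longrightarrow> (f \<oplus> g) \<cdot> p1 A B = f \<cdot> p1 A B \<oplus> g \<cdot> p1 A B"
  using cla unfolding cla_def by simp

lemma zero_p0: "zero X (prd A B) \<cdot> p0 A B = zero X A"
  using cla unfolding cla_def by simp

lemma zero_p1: "zero X (prd A B) \<cdot> p1 A B = zero X B"
  using cla unfolding cla_def by simp

lemma pair_eqI:
  assumes "h \<in> hom X (prd A B)" "h \<cdot> p0 A B = a" "h \<cdot> p1 A B = b"
  shows "h = pair a b"
  using pair_eta[OF assms(1)] assms(2,3) by simp

lemma cmp_pair:
  assumes f: "f \<in> hom X Y" and a: "a \<in> hom Y A" and b: "b \<in> hom Y B"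
  shows "f \<cdot> pair a b = pair (f \<cdot> a) (f \<cdot> b)"
proof (rule pair_eqI)
  show "f \<cdot> pair a b \<in> hom X (prd A B)"
    by (rule hom_intros assms)+
  show "f \<cdot> pair a b \<cdot> p0 A B = f \<cdot> a"
    using cmp_assoc[OF f pair_hom[OF a b] p0_hom] by (simp add: pair_p0[OF a b])
  show "f \<cdot> pair a b \<cdot> p1 A B = f \<cdot> b"
    using cmp_assoc[OF f pair_hom[OF a b] p1_hom] by (simp add: pair_p1[OF a b])
qed

lemma pair_add:
  assumes "a \<in> hom X A" "b \<in> hom X B" "c \<in> hom X A" "d \<in> hom X B"
  shows "pair a b \<oplus> pair c d = pair (a \<oplus> c) (b \<oplus> d)"
proof (rule pair_eqI)
  show "pair a b \<oplus> pair c d \<in> hom X (prd A B)"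
    by (rule hom_intros assms)+
  show "(pair a b \<oplus> pair c d) \<cdot> p0 A B = a \<oplus> c"
    using add_p0[OF pair_hom[OF assms(1,2)] pair_hom[OF assms(3,4)]]
    by (simp add: pair_p0[OF assms(1,2)] pair_p0[OF assms(3,4)])
  show "(pair a b \<oplus> pair c d) \<cdot> p1 A B = b \<oplus> d"
    using add_p1[OF pair_hom[OF assms(1,2)] pair_hom[OF assms(3,4)]]
    by (simp add: pair_p1[OF assms(1,2)] pair_p1[OF assms(3,4)])
qed

lemma zero_pair: "zero X (prd A B) = pair (zero X A) (zero X B)"
  by (rule pair_eqI[OF zero_hom zero_p0 zero_p1])

lemma pair_p0_p1: "pair (p0 A B) (p1 A B) = cl_id C (prd A B)"
  using pair_eta[OF id_hom] by (simp add: id_cmp[OF p0_hom] id_cmp[OF p1_hom])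

lemma pmap_hom [hom_intros]:
  "f \<in> hom A A' \<Longrightarrow> g \<in> hom B B' \<Longrightarrow> pmap C A B f g \<in> hom (prd A B) (prd A' B')"
  unfolding pmap_def by (rule hom_intros | assumption)+

lemma pmap_p0: "f \<in> hom A A' \<Longrightarrow> g \<in> hom B B' \<Longrightarrow> pmap C A B f g \<cdot> p0 A' B' = p0 A B \<cdot> f"
  unfolding pmap_def by (rule pair_p0) (rule hom_intros | assumption)+

lemma pmap_p1: "f \<in> hom A A' \<Longrightarrow> g \<in> hom B B' \<Longrightarrow> pmap C A B f g \<cdot> p1 A' B' = p1 A B \<cdot> g"
  unfolding pmap_def by (rule pair_p1) (rule hom_intros | assumption)+

lemma pair_pmap:
  assumes a: "a \<in> hom X A" and b: "b \<in> hom X B" and f: "f \<in> hom A A'" and g: "g \<in> hom B B'"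
  shows "pair a b \<cdot> pmap C A B f g = pair (a \<cdot> f) (b \<cdot> g)"
proof -
  have "pair a b \<cdot> pmap C A B f g = pair (pair a b \<cdot> (p0 A B \<cdot> f)) (pair a b \<cdot> (p1 A B \<cdot> g))"
    unfolding pmap_def by (rule cmp_pair) (rule hom_intros assms)+
  also have "\<dots> = pair (a \<cdot> f) (b \<cdot> g)"
    using cmp_assoc[OF pair_hom[OF a b] p0_hom f] cmp_assoc[OF pair_hom[OF a b] p1_hom g]
    by (simp add: pair_p0[OF a b] pair_p1[OF a b])
  finally show ?thesis .
qed

lemma pmap_pmap:
  assumes "f \<in> hom A A'" "g \<in> hom B B'" "f' \<in> hom A' A''" "g' \<in> hom B' B''"
  shows "pmap C A B f g \<cdot> pmap C A' B' f' g' = pmap C A B (f \<cdot> f') (g \<cdot> g')"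
proof -
  have "pmap C A B f g \<cdot> pmap C A' B' f' g' = pair (p0 A B \<cdot> f \<cdot> f') (p1 A B \<cdot> g \<cdot> g')"
    unfolding pmap_def[of C A B f g] by (rule pair_pmap) (rule hom_intros assms)+
  then show ?thesis
    by (simp add: pmap_def cmp_assoc[OF p0_hom assms(1,3)] cmp_assoc[OF p1_hom assms(2,4)])
qed

lemma pmap_id: "pmap C A B (cl_id C A) (cl_id C B) = cl_id C (prd A B)"
  by (simp add: pmap_def cmp_id[OF p0_hom] cmp_id[OF p1_hom] pair_p0_p1)

lemma cmp_pmap:
  assumes a: "a \<in> hom Z (prd A B)" and f: "f \<in> hom A A'" and g: "g \<in> hom B B'"
  shows "a \<cdot> pmap C A B f g = pair (a \<cdot> p0 A B \<cdot> f) (a \<cdot> p1 A B \<cdot> g)"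
proof -
  have "a \<cdot> pmap C A B f g = pair (a \<cdot> (p0 A B \<cdot> f)) (a \<cdot> (p1 A B \<cdot> g))"
    unfolding pmap_def by (rule cmp_pair) (rule hom_intros assms)+
  then show ?thesis
    by (simp add: cmp_assoc[OF a p0_hom f] cmp_assoc[OF a p1_hom g])
qed

lemma p0_Pob_hom [hom_intros]: "p0 X X \<in> hom (Pob C X) X"
  unfolding Pob_def by (rule p0_hom)

lemma p1_Pob_hom [hom_intros]: "p1 X X \<in> hom (Pob C X) X"
  unfolding Pob_def by (rule p1_hom)

lemma Par_hom [hom_intros]: "h \<in> hom X Y \<Longrightarrow> Par C X h \<in> hom (Pob C X) (Pob C Y)"
  unfolding Par_def Pob_def by (rule pmap_hom)

lemma Par_cmp: "h \<in> hom X Y \<Longrightarrow> k \<in> hom Y Z \<Longrightarrow> Par C X (h \<cdot> k) = Par C X h \<cdot> Par C Y k"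
  unfolding Par_def by (simp add: pmap_pmap)

lemma Par_p0: "h \<in> hom X Y \<Longrightarrow> Par C X h \<cdot> p0 Y Y = p0 X X \<cdot> h"
  unfolding Par_def by (rule pmap_p0)

lemma Par_p1: "h \<in> hom X Y \<Longrightarrow> Par C X h \<cdot> p1 Y Y = p1 X X \<cdot> h"
  unfolding Par_def by (rule pmap_p1)

lemma Parn_hom [hom_intros]: "h \<in> hom X Y \<Longrightarrow> Parn C m X h \<in> hom (Pn C m X) (Pn C m Y)"
  by (induction m) (simp_all add: Pn_Suc Par_hom)

lemma Parn_cmp:
  assumes "h \<in> hom X Y" "k \<in> hom Y Z"
  shows "Parn C m X (h \<cdot> k) = Parn C m X h \<cdot> Parn C m Y k"
  by (induction m) (simp_all add: Par_cmp[OF Parn_hom[OF assms(1)] Parn_hom[OF assms(2)]])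

lemma Parn_id: "Parn C m X (cl_id C X) = cl_id C (Pn C m X)"
  by (induction m) (simp_all add: Par_def pmap_id Pn_Suc Pob_def)

subsection \<open>Additive maps and naturality of the structure maps\<close>

definition additive :: "'o \<Rightarrow> 'o \<Rightarrow> 'm \<Rightarrow> bool" where
  "additive X Y g \<longleftrightarrow> g \<in> hom X Y \<and>
     (\<forall>Z a b. a \<in> hom Z X \<longrightarrow> b \<in> hom Z X \<longrightarrow> (a \<oplus> b) \<cdot> g = a \<cdot> g \<oplus> b \<cdot> g) \<and>
     (\<forall>Z. zero Z X \<cdot> g = zero Z Y)"

lemma additiveD:
  assumes "additive X Y g"
  shows additive_hom: "g \<in> hom X Y"
    and additive_add: "a \<in> hom Z X \<Longrightarrow> b \<in> hom Z X \<Longrightarrow> (a \<oplus> b) \<cdot> g = a \<cdot> g \<oplus> b \<cdot> g"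
    and additive_zero: "zero Z X \<cdot> g = zero Z Y"
  using assms by (simp_all add: additive_def)

lemma additive_p0: "additive (prd A B) A (p0 A B)"
  unfolding additive_def by (simp add: p0_hom add_p0 zero_p0)

lemma additive_Par:
  assumes "additive X Y g"
  shows "additive (Pob C X) (Pob C Y) (Par C X g)"
proof -
  note g = additive_hom[OF assms] and g_add = additive_add[OF assms]
    and g_zero = additive_zero[OF assms]
  have "(a \<oplus> b) \<cdot> Par C X g = a \<cdot> Par C X g \<oplus> b \<cdot> Par C X g"
    if a: "a \<in> hom Z (prd X X)" and b: "b \<in> hom Z (prd X X)" for Z a b
  proof -
    have ab: "a \<oplus> b \<in> hom Z (prd X X)"
      by (rule add_hom[OF a b])
    have "(a \<oplus> b) \<cdot> Par C X g = pair ((a \<oplus> b) \<cdot> p0 X X \<cdot> g) ((a \<oplus> b) \<cdot> p1 X X \<cdot> g)"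
      unfolding Par_def by (rule cmp_pmap[OF ab g g])
    also have "\<dots> = pair (a \<cdot> p0 X X \<cdot> g \<oplus> b \<cdot> p0 X X \<cdot> g) (a \<cdot> p1 X X \<cdot> g \<oplus> b \<cdot> p1 X X \<cdot> g)"
      by (simp add: add_p0[OF a b] add_p1[OF a b] g_add[OF cmp_hom[OF a p0_hom] cmp_hom[OF b p0_hom]]
          g_add[OF cmp_hom[OF a p1_hom] cmp_hom[OF b p1_hom]])
    also have "\<dots> = pair (a \<cdot> p0 X X \<cdot> g) (a \<cdot> p1 X X \<cdot> g) \<oplus> pair (b \<cdot> p0 X X \<cdot> g) (b \<cdot> p1 X X \<cdot> g)"
      by (rule pair_add[symmetric]) (rule hom_intros a b g)+
    also have "\<dots> = a \<cdot> Par C X g \<oplus> b \<cdot> Par C X g"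
      unfolding Par_def by (simp add: cmp_pmap[OF a g g] cmp_pmap[OF b g g])
    finally show ?thesis .
  qed
  moreover have "zero Z (prd X X) \<cdot> Par C X g = zero Z (prd Y Y)" for Z
    unfolding Par_def
    by (simp add: cmp_pmap[OF zero_hom g g] zero_p0 zero_p1 g_zero zero_pair[symmetric])
  ultimately show ?thesis
    unfolding additive_def Pob_def using Par_hom[OF g, unfolded Pob_def] by simp
qed

lemma additive_Parn: "additive X Y g \<Longrightarrow> additive (Pn C m X) (Pn C m Y) (Parn C m X g)"
  by (induction m) (simp_all add: Pn_Suc additive_Par)

lemma unit10_hom [hom_intros]: "unit10 C X \<in> hom X (Pob C X)"
  unfolding unit10_def Pob_def by (rule hom_intros)+

lemma unit01_hom [hom_intros]: "unit01 C X \<in> hom X (Pob C X)"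
  unfolding unit01_def Pob_def by (rule hom_intros)+

lemma one_x_pr0_hom [hom_intros]: "one_x_pr0 C X \<in> hom (prd X (Pob C X)) (Pob C X)"
  unfolding one_x_pr0_def Pob_def by (rule hom_intros)+

lemma one_x_pr1_hom [hom_intros]: "one_x_pr1 C X \<in> hom (prd X (Pob C X)) (Pob C X)"
  unfolding one_x_pr1_def Pob_def by (rule hom_intros)+

lemma one_x_sum_hom [hom_intros]: "one_x_sum C X \<in> hom (prd X (Pob C X)) (Pob C X)"
  unfolding one_x_sum_def Pob_def by (rule hom_intros)+

lemma ell_hom [hom_intros]: "ell C X \<in> hom (Pob C X) (Pob C (Pob C X))"
  unfolding ell_def Pob_def by (rule hom_intros unit10_hom[unfolded Pob_def] unit01_hom[unfolded Pob_def])+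

lemma cswap_hom [hom_intros]: "cswap C X \<in> hom (Pob C (Pob C X)) (Pob C (Pob C X))"
  unfolding cswap_def Pob_def Let_def by (rule hom_intros)+

lemma unit10_natural:
  assumes g: "g \<in> hom X Y" and g_zero: "zero X X \<cdot> g = zero X Y"
  shows "unit10 C X \<cdot> Par C X g = g \<cdot> unit10 C Y"
proof -
  have "unit10 C X \<cdot> Par C X g = pair (cl_id C X \<cdot> g) (zero X X \<cdot> g)"
    unfolding unit10_def Par_def by (rule pair_pmap) (rule hom_intros g)+
  also have "\<dots> = g \<cdot> unit10 C Y"
    unfolding unit10_def
    by (simp add: cmp_pair[OF g id_hom zero_hom] id_cmp[OF g] cmp_id[OF g] cmp_zero[OF g] g_zero)
  finally show ?thesis .
qed

lemma unit01_natural: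
  assumes g: "g \<in> hom X Y" and g_zero: "zero X X \<cdot> g = zero X Y"
  shows "unit01 C X \<cdot> Par C X g = g \<cdot> unit01 C Y"
proof -
  have "unit01 C X \<cdot> Par C X g = pair (zero X X \<cdot> g) (cl_id C X \<cdot> g)"
    unfolding unit01_def Par_def by (rule pair_pmap) (rule hom_intros g)+
  also have "\<dots> = g \<cdot> unit01 C Y"
    unfolding unit01_def
    by (simp add: cmp_pair[OF g zero_hom id_hom] id_cmp[OF g] cmp_id[OF g] cmp_zero[OF g] g_zero)
  finally show ?thesis .
qed

lemma pmap_id_natural:
  assumes g: "g \<in> hom X Y"
    and q: "q \<in> hom (Pob C X) X" and q': "q' \<in> hom (Pob C Y) Y"
    and q_natural: "q \<cdot> g = Par C X g \<cdot> q'"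
  shows "pmap C X (Pob C X) (cl_id C X) q \<cdot> Par C X g
    = pmap C X (Pob C X) g (Par C X g) \<cdot> pmap C Y (Pob C Y) (cl_id C Y) q'"
proof -
  have "pmap C X (Pob C X) (cl_id C X) q \<cdot> Par C X g = pmap C X (Pob C X) (cl_id C X \<cdot> g) (q \<cdot> g)"
    unfolding Par_def by (rule pmap_pmap) (rule hom_intros assms)+
  also have "\<dots> = pmap C X (Pob C X) (g \<cdot> cl_id C Y) (Par C X g \<cdot> q')"
    by (simp add: id_cmp[OF g] cmp_id[OF g] q_natural)
  also have "\<dots> = pmap C X (Pob C X) g (Par C X g) \<cdot> pmap C Y (Pob C Y) (cl_id C Y) q'"
    by (rule pmap_pmap[symmetric]) (rule hom_intros assms)+
  finally show ?thesis .
qed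

lemma one_x_pr0_natural:
  "g \<in> hom X Y \<Longrightarrow>
    one_x_pr0 C X \<cdot> Par C X g = pmap C X (Pob C X) g (Par C X g) \<cdot> one_x_pr0 C Y"
  unfolding one_x_pr0_def by (rule pmap_id_natural) (rule hom_intros Par_p0[symmetric] | assumption)+

lemma one_x_pr1_natural:
  "g \<in> hom X Y \<Longrightarrow>
    one_x_pr1 C X \<cdot> Par C X g = pmap C X (Pob C X) g (Par C X g) \<cdot> one_x_pr1 C Y"
  unfolding one_x_pr1_def by (rule pmap_id_natural) (rule hom_intros Par_p1[symmetric] | assumption)+

lemma one_x_sum_natural:
  assumes "additive X Y g"
  shows "one_x_sum C X \<cdot> Par C X g = pmap C X (Pob C X) g (Par C X g) \<cdot> one_x_sum C Y"
proof -
  note g = additive_hom[OF assms]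
  have "(p0 X X \<oplus> p1 X X) \<cdot> g = p0 X X \<cdot> g \<oplus> p1 X X \<cdot> g"
    by (rule additive_add[OF assms p0_hom p1_hom])
  also have "\<dots> = Par C X g \<cdot> (p0 Y Y \<oplus> p1 Y Y)"
    by (simp add: cmp_add[OF Par_hom[OF g, unfolded Pob_def] p0_hom p1_hom] Par_p0[OF g] Par_p1[OF g])
  finally show ?thesis
    unfolding one_x_sum_def by (intro pmap_id_natural g) (rule hom_intros)+
qed

lemma ell_natural:
  assumes g: "g \<in> hom X Y" and g_zero: "zero X X \<cdot> g = zero X Y"
  shows "ell C X \<cdot> Par C (Pob C X) (Par C X g) = Par C X g \<cdot> ell C Y"
proof -
  have "ell C X \<cdot> Par C (Pob C X) (Par C X g)
      = pmap C X X (unit10 C X \<cdot> Par C X g) (unit01 C X \<cdot> Par C X g)"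
    unfolding ell_def Par_def[of C "Pob C X"] by (rule pmap_pmap) (rule hom_intros g)+
  also have "\<dots> = pmap C X X (g \<cdot> unit10 C Y) (g \<cdot> unit01 C Y)"
    by (simp add: unit10_natural[OF g g_zero] unit01_natural[OF g g_zero])
  also have "\<dots> = Par C X g \<cdot> ell C Y"
    unfolding ell_def Par_def[of C X] by (rule pmap_pmap[symmetric]) (rule hom_intros g)+
  finally show ?thesis .
qed

lemma pair_cswap:
  assumes a: "a \<in> hom Z X" and b: "b \<in> hom Z X" and c: "c \<in> hom Z X" and d: "d \<in> hom Z X"
  shows "pair (pair a b) (pair c d) \<cdot> cswap C X = pair (pair a c) (pair b d)"
proof -
  let ?P = "prd X X" and ?h = "pair (pair a b) (pair c d)"
  have ab: "pair a b \<in> hom Z ?P" and cd: "pair c d \<in> hom Z ?P"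
    by (rule hom_intros assms)+
  have h: "?h \<in> hom Z (prd ?P ?P)"
    by (rule hom_intros ab cd)+
  have c00: "p0 ?P ?P \<cdot> p0 X X \<in> hom (prd ?P ?P) X" and c01: "p0 ?P ?P \<cdot> p1 X X \<in> hom (prd ?P ?P) X"
    and c10: "p1 ?P ?P \<cdot> p0 X X \<in> hom (prd ?P ?P) X" and c11: "p1 ?P ?P \<cdot> p1 X X \<in> hom (prd ?P ?P) X"
    by (rule hom_intros)+
  show ?thesis
    unfolding cswap_def Pob_def Let_def
    by (simp add: cmp_pair[OF h pair_hom[OF c00 c10] pair_hom[OF c01 c11]]
        cmp_pair[OF h c00 c10] cmp_pair[OF h c01 c11]
        cmp_assoc[OF h p0_hom p0_hom, symmetric] cmp_assoc[OF h p0_hom p1_hom, symmetric]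
        cmp_assoc[OF h p1_hom p0_hom, symmetric] cmp_assoc[OF h p1_hom p1_hom, symmetric]
        pair_p0[OF ab cd] pair_p1[OF ab cd] pair_p0[OF a b] pair_p1[OF a b] pair_p0[OF c d] pair_p1[OF c d])
qed

lemma cswap_natural:
  assumes g: "g \<in> hom X Y"
  shows "cswap C X \<cdot> Par C (Pob C X) (Par C X g) = Par C (Pob C X) (Par C X g) \<cdot> cswap C Y"
proof -
  let ?P = "prd X X"
  let ?q = "\<lambda>i j. i ?P ?P \<cdot> j X X \<cdot> g"
  have gg: "pmap C X X g g \<in> hom ?P (prd Y Y)"
    by (rule hom_intros g)+
  have coord: "i ?P ?P \<cdot> j X X \<in> hom (prd ?P ?P) X"
    if "i \<in> {p0, p1}" "j \<in> {p0, p1}" for i j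
    using that by (auto intro: hom_intros)
  have "cswap C X \<cdot> Par C (Pob C X) (Par C X g) =
      pair (pair (p0 ?P ?P \<cdot> p0 X X) (p1 ?P ?P \<cdot> p0 X X) \<cdot> pmap C X X g g)
           (pair (p0 ?P ?P \<cdot> p1 X X) (p1 ?P ?P \<cdot> p1 X X) \<cdot> pmap C X X g g)"
    unfolding cswap_def Par_def Pob_def Let_def by (rule pair_pmap) (rule hom_intros gg)+
  also have "\<dots> = pair (pair (?q p0 p0) (?q p1 p0)) (pair (?q p0 p1) (?q p1 p1))"
    by (simp add: pair_pmap[OF coord coord g g])
  also have "\<dots> = pair (pair (?q p0 p0) (?q p0 p1)) (pair (?q p1 p0) (?q p1 p1)) \<cdot> cswap C Y"
    by (rule pair_cswap[symmetric]) (rule hom_intros g)+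
  also have "pair (pair (?q p0 p0) (?q p0 p1)) (pair (?q p1 p0) (?q p1 p1))
      = Par C (Pob C X) (Par C X g)"
    unfolding Par_def[of C "Pob C X"] Pob_def
    by (simp add: pmap_def[of C ?P] cmp_pmap[OF p0_hom g g] cmp_pmap[OF p1_hom g g] Par_def)
  finally show ?thesis .
qed

lemma unit10_p0: "unit10 C X \<cdot> p0 X X = cl_id C X"
  unfolding unit10_def by (rule pair_p0[OF id_hom zero_hom])

lemma one_x_pr0_p0: "one_x_pr0 C X \<cdot> p0 X X = p0 X (Pob C X)"
  unfolding one_x_pr0_def by (simp add: pmap_p0[OF id_hom p0_Pob_hom] cmp_id[OF p0_hom])

lemma one_x_pr1_p0: "one_x_pr1 C X \<cdot> p0 X X = p0 X (Pob C X)"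
  unfolding one_x_pr1_def by (simp add: pmap_p0[OF id_hom p1_Pob_hom] cmp_id[OF p0_hom])

lemma one_x_sum_p0: "one_x_sum C X \<cdot> p0 X X = p0 X (Pob C X)"
  unfolding one_x_sum_def
  by (simp add: pmap_p0[OF id_hom add_hom[OF p0_Pob_hom p1_Pob_hom]] cmp_id[OF p0_hom])

lemma ell_p0: "ell C X \<cdot> p0 (Pob C X) (Pob C X) = p0 X X \<cdot> unit10 C X"
  unfolding ell_def by (rule pmap_p0[OF unit10_hom unit01_hom])

lemma cmp_unit10: "a \<in> hom Z X \<Longrightarrow> a \<cdot> unit10 C X = pair a (zero Z X)"
  unfolding unit10_def by (simp add: cmp_pair[OF _ id_hom zero_hom] cmp_id cmp_zero)

lemma cmp_unit01: "a \<in> hom Z X \<Longrightarrow> a \<cdot> unit01 C X = pair (zero Z X) a"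
  unfolding unit01_def by (simp add: cmp_pair[OF _ zero_hom id_hom] cmp_id cmp_zero)

lemma ell_Par_p0: "ell C X \<cdot> Par C (Pob C X) (p0 X X) = p0 X X \<cdot> unit10 C X"
proof -
  have "ell C X \<cdot> Par C (Pob C X) (p0 X X) = pmap C X X (unit10 C X \<cdot> p0 X X) (unit01 C X \<cdot> p0 X X)"
    unfolding ell_def Par_def by (rule pmap_pmap) (rule hom_intros)+
  also have "\<dots> = pmap C X X (cl_id C X) (zero X X)"
    unfolding unit10_def unit01_def by (simp add: pair_p0[OF id_hom zero_hom] pair_p0[OF zero_hom id_hom])
  also have "\<dots> = p0 X X \<cdot> unit10 C X"
    by (simp add: pmap_def cmp_unit10[OF p0_hom] cmp_id[OF p0_hom] cmp_zero[OF p1_hom])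
  finally show ?thesis .
qed

lemma cswap_p0: "cswap C X \<cdot> p0 (Pob C X) (Pob C X) = Par C (Pob C X) (p0 X X)"
  unfolding cswap_def Par_def pmap_def Pob_def Let_def by (rule pair_p0) (rule hom_intros)+

lemma cswap_Par_p0: "cswap C X \<cdot> Par C (Pob C X) (p0 X X) = p0 (Pob C X) (Pob C X)"
proof -
  let ?P = "prd X X"
  have "cswap C X \<cdot> Par C (Pob C X) (p0 X X)
      = pair (pair (p0 ?P ?P \<cdot> p0 X X) (p1 ?P ?P \<cdot> p0 X X) \<cdot> p0 X X)
             (pair (p0 ?P ?P \<cdot> p1 X X) (p1 ?P ?P \<cdot> p1 X X) \<cdot> p0 X X)"
    unfolding cswap_def Par_def Pob_def Let_def by (rule pair_pmap) (rule hom_intros)+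
  also have "\<dots> = pair (p0 ?P ?P \<cdot> p0 X X) (p0 ?P ?P \<cdot> p1 X X)"
    by (simp add: pair_p0[OF cmp_hom[OF p0_hom p0_hom] cmp_hom[OF p1_hom p0_hom]]
        pair_p0[OF cmp_hom[OF p0_hom p1_hom] cmp_hom[OF p1_hom p1_hom]])
  also have "\<dots> = p0 ?P ?P"
    by (simp add: cmp_pair[OF p0_hom p0_hom p1_hom, symmetric] pair_p0_p1 cmp_id[OF p0_hom])
  finally show ?thesis
    by (simp add: Pob_def)
qed

lemma pair_one_x_pr0:
  "a \<in> hom Z X \<Longrightarrow> b \<in> hom Z X \<Longrightarrow> c \<in> hom Z X \<Longrightarrow> pair a (pair b c) \<cdot> one_x_pr0 C X = pair a b"
  unfolding one_x_pr0_def Pob_def by (simp add: pair_pmap[OF _ pair_hom id_hom p0_hom] cmp_id pair_p0)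

lemma pair_one_x_pr1:
  "a \<in> hom Z X \<Longrightarrow> b \<in> hom Z X \<Longrightarrow> c \<in> hom Z X \<Longrightarrow> pair a (pair b c) \<cdot> one_x_pr1 C X = pair a c"
  unfolding one_x_pr1_def Pob_def by (simp add: pair_pmap[OF _ pair_hom id_hom p1_hom] cmp_id pair_p1)

lemma pair_one_x_sum:
  "a \<in> hom Z X \<Longrightarrow> b \<in> hom Z X \<Longrightarrow> c \<in> hom Z X \<Longrightarrow>
    pair a (pair b c) \<cdot> one_x_sum C X = pair a (b \<oplus> c)"
  unfolding one_x_sum_def Pob_def
  by (simp add: pair_pmap[OF _ pair_hom id_hom add_hom[OF p0_hom p1_hom]] cmp_id
      cmp_add[OF pair_hom p0_hom p1_hom] pair_p0 pair_p1)

lemma pair_ell: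
  "a \<in> hom Z X \<Longrightarrow> b \<in> hom Z X \<Longrightarrow>
    pair a b \<cdot> ell C X = pair (pair a (zero Z X)) (pair (zero Z X) b)"
  unfolding ell_def by (simp add: pair_pmap[OF _ _ unit10_hom unit01_hom] cmp_unit10 cmp_unit01)

subsection \<open>Calculus of pre-D-sequences\<close>

lemma pre_dseqD: "pre_dseq C X B F \<Longrightarrow> F n \<in> hom (Pn C n X) B"
  by (simp add: pre_dseq_def)

lemma pre_dseq_sprec [hom_intros]:
  "h \<in> hom X Y \<Longrightarrow> pre_dseq C Y B F \<Longrightarrow> pre_dseq C X B (sprec C X h F)"
  by (simp add: pre_dseq_def sprec_def cmp_hom[OF Parn_hom])

lemma pre_dseq_spair [hom_intros]:
  "pre_dseq C X B F \<Longrightarrow> pre_dseq C X B' G \<Longrightarrow> pre_dseq C X (prd B B') (spair C F G)"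
  by (simp add: pre_dseq_def spair_def pair_hom)

lemma pre_dseq_Tseq:
  "pre_dseq C A B f \<Longrightarrow> pre_dseq C (Pob C A) (Pob C B) (Tseq C A f)"
  unfolding Tseq_eq_spair Pob_def[of C B] by (rule hom_intros pre_dseq_Dop | assumption)+

lemma sprec_cmp:
  assumes h: "h \<in> hom X Y" and k: "k \<in> hom Y Z" and F: "pre_dseq C Z B F"
  shows "sprec C X (h \<cdot> k) F = sprec C X h (sprec C Y k F)"
  by (simp add: sprec_def Parn_cmp[OF h k] cmp_assoc[OF Parn_hom[OF h] Parn_hom[OF k] pre_dseqD[OF F]])

lemma sprec_natural:
  assumes "h \<in> hom X Y" "k \<in> hom Y Z" "h' \<in> hom X Y'" "k' \<in> hom Y' Z"
    and "h \<cdot> k = h' \<cdot> k'" and "pre_dseq C Z B F"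
  shows "sprec C X h (sprec C Y k F) = sprec C X h' (sprec C Y' k' F)"
  using assms by (metis sprec_cmp)

lemma sprec_id: "pre_dseq C X B F \<Longrightarrow> sprec C X (cl_id C X) F = F"
  by (simp add: sprec_def Parn_id id_cmp[OF pre_dseqD])

lemma sprec_spair:
  assumes h: "h \<in> hom X Y" and F: "pre_dseq C Y B F" and G: "pre_dseq C Y B' G"
  shows "sprec C X h (spair C F G) = spair C (sprec C X h F) (sprec C X h G)"
  by (simp add: sprec_def spair_def cmp_pair[OF Parn_hom[OF h] pre_dseqD[OF F] pre_dseqD[OF G]])

lemma sprec_spost:
  assumes h: "h \<in> hom X Y" and F: "pre_dseq C Y B F" and k: "k \<in> hom B B'"
  shows "sprec C X h (spost C F k) = spost C (sprec C X h F) k"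
  by (simp add: sprec_def spost_def cmp_assoc[OF Parn_hom[OF h] pre_dseqD[OF F] k])

lemma sprec_szero: "h \<in> hom X Y \<Longrightarrow> sprec C X h (szero C Y B) = szero C X B"
  by (simp add: sprec_def szero_def cmp_zero[OF Parn_hom])

lemma sprec_sadd:
  assumes h: "h \<in> hom X Y" and F: "pre_dseq C Y B F" and G: "pre_dseq C Y B G"
  shows "sprec C X h (sadd C F G) = sadd C (sprec C X h F) (sprec C X h G)"
  by (simp add: sprec_def sadd_def cmp_add[OF Parn_hom[OF h] pre_dseqD[OF F] pre_dseqD[OF G]])

lemma spair_szero: "spair C (szero C X B) (szero C X B') = szero C X (prd B B')"
  by (simp add: spair_def szero_def zero_pair)

lemma spair_sadd:
  assumes "pre_dseq C X B F" "pre_dseq C X B' G" "pre_dseq C X B F'" "pre_dseq C X B' G'"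
  shows "sadd C (spair C F G) (spair C F' G') = spair C (sadd C F F') (sadd C G G')"
  by (simp add: spair_def sadd_def pair_add[OF assms[THEN pre_dseqD]])

lemma spost_unit10: "pre_dseq C X B F \<Longrightarrow> spost C F (unit10 C B) = spair C F (szero C X B)"
  by (simp add: spost_def spair_def szero_def cmp_unit10[OF pre_dseqD])

lemma spost_one_x_pr0:
  assumes "pre_dseq C X B F" "pre_dseq C X B G" "pre_dseq C X B H"
  shows "spost C (spair C F (spair C G H)) (one_x_pr0 C B) = spair C F G"
  by (simp add: spost_def spair_def pair_one_x_pr0[OF assms[THEN pre_dseqD]])

lemma spost_one_x_pr1:
  assumes "pre_dseq C X B F" "pre_dseq C X B G" "pre_dseq C X B H"
  shows "spost C (spair C F (spair C G H)) (one_x_pr1 C B) = spair C F H"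
  by (simp add: spost_def spair_def pair_one_x_pr1[OF assms[THEN pre_dseqD]])

lemma spost_one_x_sum:
  assumes "pre_dseq C X B F" "pre_dseq C X B G" "pre_dseq C X B H"
  shows "spost C (spair C F (spair C G H)) (one_x_sum C B) = spair C F (sadd C G H)"
  by (simp add: spost_def spair_def sadd_def pair_one_x_sum[OF assms[THEN pre_dseqD]])

lemma spost_ell:
  assumes "pre_dseq C X B F" "pre_dseq C X B G"
  shows "spost C (spair C F G) (ell C B) = spair C (spair C F (szero C X B)) (spair C (szero C X B) G)"
  by (simp add: spost_def spair_def szero_def pair_ell[OF assms[THEN pre_dseqD]])

lemma spost_cswap:
  assumes "pre_dseq C X B F" "pre_dseq C X B G" "pre_dseq C X B H" "pre_dseq C X B K"
  shows "spost C (spair C (spair C F G) (spair C H K)) (cswap C B)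
    = spair C (spair C F H) (spair C G K)"
  by (simp add: spost_def spair_def pair_cswap[OF assms[THEN pre_dseqD]])

subsection \<open>The tangent sequence\<close>

lemma dseq_laws_spair:
  assumes F: "pre_dseq C (Pob C X) B F" and G: "pre_dseq C (Pob C X) B' G"
    and "dseq_laws C X B F" and "dseq_laws C X B' G"
  shows "dseq_laws C X (prd B B') (spair C F G)"
proof -
  note DF = pre_dseq_Dop[OF F] and DG = pre_dseq_Dop[OF G]
  show ?thesis
    using assms(3,4) unfolding dseq_laws_def Dop_spair
    by (simp add: sprec_spair[OF _ F G] sprec_spair[OF _ DF DG] hom_intros spair_szero
        spair_sadd[OF pre_dseq_sprec[OF _ F] pre_dseq_sprec[OF _ G] pre_dseq_sprec[OF _ F]
          pre_dseq_sprec[OF _ G]])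
qed

lemma dseq_laws_sprec_Par:
  assumes g: "additive X Y g" and F: "pre_dseq C (Pob C Y) B F" and laws: "dseq_laws C Y B F"
  shows "dseq_laws C X B (sprec C (Pob C X) (Par C X g) F)"
proof -
  note gh = additive_hom[OF g] and DF = pre_dseq_Dop[OF F]
  let ?G = "sprec C (Pob C X) (Par C X g) F"
  let ?Q = "prd X (Pob C X)" and ?Q' = "prd Y (Pob C Y)"
  let ?pm = "pmap C X (Pob C X) g (Par C X g)"
  have pm: "?pm \<in> hom ?Q ?Q'"
    by (rule hom_intros gh)+
  have G_unit10: "sprec C X (unit10 C X) ?G = sprec C X g (sprec C Y (unit10 C Y) F)"
    by (rule sprec_natural[OF _ _ _ _ unit10_natural[OF gh additive_zero[OF g]] F]) (rule hom_intros gh)+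
  have G_one_x_pr0: "sprec C ?Q (one_x_pr0 C X) ?G = sprec C ?Q ?pm (sprec C ?Q' (one_x_pr0 C Y) F)"
    by (rule sprec_natural[OF _ _ _ _ one_x_pr0_natural[OF gh] F]) (rule hom_intros gh)+
  have G_one_x_pr1: "sprec C ?Q (one_x_pr1 C X) ?G = sprec C ?Q ?pm (sprec C ?Q' (one_x_pr1 C Y) F)"
    by (rule sprec_natural[OF _ _ _ _ one_x_pr1_natural[OF gh] F]) (rule hom_intros gh)+
  have G_one_x_sum: "sprec C ?Q (one_x_sum C X) ?G = sprec C ?Q ?pm (sprec C ?Q' (one_x_sum C Y) F)"
    by (rule sprec_natural[OF _ _ _ _ one_x_sum_natural[OF g] F]) (rule hom_intros gh)+
  let ?PPg = "Par C (Pob C X) (Par C X g)"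
  have G_ell: "sprec C (Pob C X) (ell C X) (sprec C (Pob C (Pob C X)) ?PPg (Dop F))
      = sprec C (Pob C X) (Par C X g) (sprec C (Pob C Y) (ell C Y) (Dop F))"
    by (rule sprec_natural[OF _ _ _ _ ell_natural[OF gh additive_zero[OF g]] DF]) (rule hom_intros gh)+
  have G_cswap: "sprec C (Pob C (Pob C X)) (cswap C X) (sprec C (Pob C (Pob C X)) ?PPg (Dop F))
      = sprec C (Pob C (Pob C X)) ?PPg (sprec C (Pob C (Pob C Y)) (cswap C Y) (Dop F))"
    by (rule sprec_natural[OF _ _ _ _ cswap_natural[OF gh] DF]) (rule hom_intros gh)+
  show ?thesis
    using laws unfolding dseq_laws_def
    by (simp add: G_unit10 G_one_x_pr0 G_one_x_pr1 G_one_x_sum G_ell G_cswap Dop_sprec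
        sprec_szero[OF gh] sprec_sadd[OF pm pre_dseq_sprec[OF one_x_pr0_hom F] pre_dseq_sprec[OF one_x_pr1_hom F]])
qed

lemma is_dseq_Tseq:
  assumes "is_dseq C A B f"
  shows "is_dseq C (Pob C A) (Pob C B) (Tseq C A f)"
proof -
  have f: "pre_dseq C A B f" and laws: "\<And>n. dseq_laws C (Pn C n A) B ((Dop ^^ Suc n) f)"
    using assms by (simp_all add: is_dseq_iff_dseq_laws)
  have "dseq_laws C (Pn C n (Pob C A)) (Pob C B) ((Dop ^^ Suc n) (Tseq C A f))" for n
  proof -
    let ?X = "Pn C n (Pob C A)" and ?Y = "Pn C n A" and ?F = "(Dop ^^ Suc n) f"
    let ?g = "Parn C n (Pob C A) (p0 A A)"
    have X: "?X = Pob C ?Y"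
      by (simp add: Pn_Pob Pn_Suc)
    have F: "pre_dseq C ?X B ?F"
      unfolding Pn_Pob by (rule pre_dseq_Dop_pow[OF f])
    have g: "additive ?X ?Y ?g"
      using additive_Parn[OF additive_p0] by (simp add: Pob_def)
    have T: "(Dop ^^ Suc n) (Tseq C A f) = spair C (sprec C (Pob C ?X) (Par C ?X ?g) ?F) (Dop ?F)"
      by (simp add: Tseq_eq_spair Dop_pow_spair Dop_pow_sprec Dop_spair Dop_sprec funpow_swap1)
    have "dseq_laws C ?X B (sprec C (Pob C ?X) (Par C ?X ?g) ?F)"
      using g F laws[of n] unfolding X by (rule dseq_laws_sprec_Par)
    moreover have "dseq_laws C ?X B (Dop ?F)"
      using laws[of "Suc n"] by (simp add: Pn_Pob)
    ultimately show ?thesis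
      unfolding T Pob_def[of C B]
      by (intro dseq_laws_spair pre_dseq_Dop F pre_dseq_sprec[OF Par_hom[OF additive_hom[OF g]] F[unfolded X]])
  qed
  then show ?thesis
    by (simp add: is_dseq_iff_dseq_laws pre_dseq_Tseq[OF f])
qed

lemma sprec_Tseq:
  assumes h: "h \<in> hom X (Pob C A)" and f: "pre_dseq C A B f"
  shows "sprec C X h (Tseq C A f) = spair C (sprec C X (h \<cdot> p0 A A) f) (sprec C X h (Dop f))"
  unfolding Tseq_eq_spair
  by (simp add: sprec_spair[OF h pre_dseq_sprec[OF p0_Pob_hom f] pre_dseq_Dop[OF f]]
      sprec_cmp[OF h p0_Pob_hom f])

context
  fixes A B f
  assumes f: "pre_dseq C A B f"
begin

lemma pre_dseq_T2seq_components:
  "pre_dseq C (prd A (Pob C A)) B (sprec C (prd A (Pob C A)) (p0 A (Pob C A)) f)"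
  "pre_dseq C (prd A (Pob C A)) B (sprec C (prd A (Pob C A)) (one_x_pr0 C A) (Dop f))"
  "pre_dseq C (prd A (Pob C A)) B (sprec C (prd A (Pob C A)) (one_x_pr1 C A) (Dop f))"
  by (rule hom_intros pre_dseq_Dop f)+

lemma Tseq_one_x_pr0:
  "sprec C (prd A (Pob C A)) (one_x_pr0 C A) (Tseq C A f) = spost C (T2seq C A f) (one_x_pr0 C B)"
  by (simp add: sprec_Tseq[OF one_x_pr0_hom f] one_x_pr0_p0 T2seq_def
      spost_one_x_pr0[OF pre_dseq_T2seq_components])

lemma Tseq_one_x_pr1:
  "sprec C (prd A (Pob C A)) (one_x_pr1 C A) (Tseq C A f) = spost C (T2seq C A f) (one_x_pr1 C B)"
  by (simp add: sprec_Tseq[OF one_x_pr1_hom f] one_x_pr1_p0 T2seq_def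
      spost_one_x_pr1[OF pre_dseq_T2seq_components])

context
  assumes laws: "dseq_laws C A B (Dop f)"
begin

lemma Tseq_unit10: "sprec C A (unit10 C A) (Tseq C A f) = spost C f (unit10 C B)"
  using laws
  by (simp add: dseq_laws_def sprec_Tseq[OF unit10_hom f] unit10_p0 sprec_id[OF f] spost_unit10[OF f])

lemma Tseq_one_x_sum:
  "sprec C (prd A (Pob C A)) (one_x_sum C A) (Tseq C A f) = spost C (T2seq C A f) (one_x_sum C B)"
  using laws
  by (simp add: dseq_laws_def sprec_Tseq[OF one_x_sum_hom f] one_x_sum_p0 T2seq_def
      spost_one_x_sum[OF pre_dseq_T2seq_components])

lemma Tseq_ell:
  "sprec C (Pob C A) (ell C A) (Tseq C (Pob C A) (Tseq C A f)) = spost C (Tseq C A f) (ell C B)"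
proof -
  let ?PA = "Pob C A" and ?P0 = "sprec C (Pob C A) (p0 A A) f"
  let ?Pp = "Par C ?PA (p0 A A)"
  have P0: "pre_dseq C ?PA B ?P0"
    by (rule hom_intros f)+
  note Df = pre_dseq_Dop[OF f] and Tf = pre_dseq_Tseq[OF f]
  have unit10_law: "sprec C A (unit10 C A) (Dop f) = szero C A B"
    and ell_law: "sprec C ?PA (ell C A) (Dop (Dop f)) = Dop f"
    using laws by (simp_all add: dseq_laws_def)
  have first: "sprec C ?PA (ell C A \<cdot> p0 ?PA ?PA) (Tseq C A f) = spair C ?P0 (szero C ?PA B)"
  proof -
    have "sprec C ?PA (ell C A \<cdot> p0 ?PA ?PA) (Tseq C A f)
        = sprec C ?PA (p0 A A) (sprec C A (unit10 C A) (Tseq C A f))"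
      unfolding ell_p0 by (rule sprec_cmp[OF p0_Pob_hom unit10_hom Tf])
    also have "\<dots> = spost C ?P0 (unit10 C B)"
      by (simp add: Tseq_unit10 sprec_spost[OF p0_Pob_hom f unit10_hom])
    also have "\<dots> = spair C ?P0 (szero C ?PA B)"
      by (rule spost_unit10[OF P0])
    finally show ?thesis .
  qed
  have second: "sprec C ?PA (ell C A) (Dop (Tseq C A f)) = spair C (szero C ?PA B) (Dop f)"
  proof -
    have DTf: "Dop (Tseq C A f) = spair C (sprec C (Pob C ?PA) ?Pp (Dop f)) (Dop (Dop f))"
      by (simp add: Tseq_eq_spair Dop_spair Dop_sprec)
    have "sprec C ?PA (ell C A) (Dop (Tseq C A f))
        = spair C (sprec C ?PA (ell C A \<cdot> ?Pp) (Dop f)) (sprec C ?PA (ell C A) (Dop (Dop f)))"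
      unfolding DTf
      by (simp add: sprec_spair[OF ell_hom pre_dseq_sprec[OF Par_hom[OF p0_Pob_hom] Df] pre_dseq_Dop[OF Df]]
          sprec_cmp[OF ell_hom Par_hom[OF p0_Pob_hom] Df])
    also have "\<dots> = spair C (sprec C ?PA (p0 A A) (sprec C A (unit10 C A) (Dop f))) (Dop f)"
      by (simp add: ell_Par_p0 sprec_cmp[OF p0_Pob_hom unit10_hom Df] ell_law)
    also have "\<dots> = spair C (szero C ?PA B) (Dop f)"
      by (simp add: unit10_law sprec_szero[OF p0_Pob_hom])
    finally show ?thesis .
  qed
  have "sprec C ?PA (ell C A) (Tseq C ?PA (Tseq C A f))
      = spair C (sprec C ?PA (ell C A \<cdot> p0 ?PA ?PA) (Tseq C A f)) (sprec C ?PA (ell C A) (Dop (Tseq C A f)))"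
    by (rule sprec_Tseq[OF ell_hom Tf])
  also have "\<dots> = spair C (spair C ?P0 (szero C ?PA B)) (spair C (szero C ?PA B) (Dop f))"
    by (simp only: first second)
  also have "\<dots> = spost C (Tseq C A f) (ell C B)"
    unfolding Tseq_eq_spair by (rule spost_ell[symmetric, OF P0 Df])
  finally show ?thesis .
qed

lemma Tseq_cswap:
  "sprec C (Pob C (Pob C A)) (cswap C A) (Tseq C (Pob C A) (Tseq C A f))
    = spost C (Tseq C (Pob C A) (Tseq C A f)) (cswap C B)"
proof -
  let ?PA = "Pob C A" and ?PPA = "Pob C (Pob C A)" and ?P0 = "sprec C (Pob C A) (p0 A A) f"
  let ?Pp = "Par C ?PA (p0 A A)" and ?q = "p0 ?PA ?PA"
  have P0: "pre_dseq C ?PA B ?P0"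
    by (rule hom_intros f)+
  have Pp: "?Pp \<in> hom ?PPA ?PA"
    by (rule hom_intros)+
  note Df = pre_dseq_Dop[OF f] and DDf = pre_dseq_Dop[OF pre_dseq_Dop[OF f]] and Tf = pre_dseq_Tseq[OF f]
  have DP0: "Dop ?P0 = sprec C ?PPA ?Pp (Dop f)"
    by (rule Dop_sprec)
  have cswap_law: "sprec C ?PPA (cswap C A) (Dop (Dop f)) = Dop (Dop f)"
    using laws by (simp add: dseq_laws_def)
  have first: "sprec C ?PPA (cswap C A \<cdot> ?q) (Tseq C A f) = spair C (sprec C ?PPA ?q ?P0) (Dop ?P0)"
  proof -
    have "sprec C ?PPA (cswap C A \<cdot> ?q) (Tseq C A f) = spair C (sprec C ?PPA ?Pp ?P0) (Dop ?P0)"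
      unfolding cswap_p0 Tseq_eq_spair DP0 by (rule sprec_spair[OF Pp P0 Df])
    also have "sprec C ?PPA ?Pp ?P0 = sprec C ?PPA ?q ?P0"
      using sprec_cmp[OF Pp p0_Pob_hom f] sprec_cmp[OF p0_Pob_hom p0_Pob_hom f]
      by (simp add: Par_p0[OF p0_Pob_hom])
    finally show ?thesis .
  qed
  have second: "sprec C ?PPA (cswap C A) (Dop (Tseq C A f)) = spair C (sprec C ?PPA ?q (Dop f)) (Dop (Dop f))"
  proof -
    have "sprec C ?PPA (cswap C A) (Dop (Tseq C A f))
        = spair C (sprec C ?PPA (cswap C A \<cdot> ?Pp) (Dop f)) (sprec C ?PPA (cswap C A) (Dop (Dop f)))"
      unfolding Tseq_eq_spair Dop_spair DP0
      by (simp add: sprec_spair[OF cswap_hom pre_dseq_sprec[OF Pp Df] DDf] sprec_cmp[OF cswap_hom Pp Df])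
    then show ?thesis
      by (simp add: cswap_Par_p0 cswap_law)
  qed
  have "sprec C ?PPA (cswap C A) (Tseq C ?PA (Tseq C A f))
      = spair C (sprec C ?PPA (cswap C A \<cdot> ?q) (Tseq C A f)) (sprec C ?PPA (cswap C A) (Dop (Tseq C A f)))"
    by (rule sprec_Tseq[OF cswap_hom Tf])
  also have "\<dots> = spair C (spair C (sprec C ?PPA ?q ?P0) (Dop ?P0)) (spair C (sprec C ?PPA ?q (Dop f)) (Dop (Dop f)))"
    by (simp only: first second)
  also have "\<dots> = spost C (spair C (spair C (sprec C ?PPA ?q ?P0) (sprec C ?PPA ?q (Dop f)))
                               (spair C (Dop ?P0) (Dop (Dop f)))) (cswap C B)"
    by (rule spost_cswap[symmetric]) (rule hom_intros P0 Df DDf pre_dseq_Dop[OF P0])+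
  also have "\<dots> = spost C (Tseq C ?PA (Tseq C A f)) (cswap C B)"
    unfolding sprec_Tseq[OF p0_Pob_hom Tf] unfolding Tseq_eq_spair Dop_spair
    by (simp add: sprec_spair[OF p0_Pob_hom P0 Df])
  finally show ?thesis .
qed

end

end

end

theorem proposition4p4:
  fixes C :: "('o, 'm) cla_data" and A B :: 'o and f :: "nat \<Rightarrow> 'm"
  assumes "cla C" and "is_dseq C A B f"
  shows "is_dseq C (Pob C A) B (Dop f) \<and>
    is_dseq C (Pob C A) (Pob C B) (Tseq C A f) \<and>
    sprec C A (unit10 C A) (Tseq C A f) = spost C f (unit10 C B) \<and>
    sprec C (cl_prd C A (Pob C A)) (one_x_pr0 C A) (Tseq C A f) = spost C (T2seq C A f) (one_x_pr0 C B) \<and>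
    sprec C (cl_prd C A (Pob C A)) (one_x_pr1 C A) (Tseq C A f) = spost C (T2seq C A f) (one_x_pr1 C B) \<and>
    sprec C (cl_prd C A (Pob C A)) (one_x_sum C A) (Tseq C A f) = spost C (T2seq C A f) (one_x_sum C B) \<and>
    sprec C (Pob C A) (ell C A) (Tseq C (Pob C A) (Tseq C A f)) = spost C (Tseq C A f) (ell C B) \<and>
    sprec C (Pob C (Pob C A)) (cswap C A) (Tseq C (Pob C A) (Tseq C A f)) =
      spost C (Tseq C (Pob C A) (Tseq C A f)) (cswap C B)"
proof -
  interpret cartesian_left_additive C
    by (rule cartesian_left_additive.intro) (fact assms(1))
  have f: "pre_dseq C A B f" and laws_n: "\<And>n. dseq_laws C (Pn C n A) B ((Dop ^^ Suc n) f)"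
    using assms(2) unfolding is_dseq_iff_dseq_laws by blast+
  have laws: "dseq_laws C A B (Dop f)"
    using laws_n[of 0] by simp
  show ?thesis
    using is_dseq_Dop[OF assms(2)] is_dseq_Tseq[OF assms(2)] Tseq_unit10[OF f laws]
      Tseq_one_x_pr0[OF f] Tseq_one_x_pr1[OF f] Tseq_one_x_sum[OF f laws]
      Tseq_ell[OF f laws] Tseq_cswap[OF f laws]
    by blast
qed

end
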